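(* Let $\Omega\subset\mathbb{R}^N$ be a bounded domain with $C^{2,\alpha}$ boundary, $\alpha\in(0,1)$, let $a,c\in C^{0,\alpha}(\overline\Omega)$ with $a>0$ and $c>0$ on $\overline\Omega$, and let $\varepsilon\in(0,1)$. Then the problem $$-\Delta u+c(x)\,(u+\varepsilon)^{-1}|\nabla u|^2=a(x)\ \text{ in }\Omega,\qquad u>0\ \text{ in }\Omega,\qquad u=0\ \text{ on }\partial\Omega$$ has at most one solution $u\in C^{2,\alpha}(\overline\Omega)$. *)

theory Defs
  imports "HOL-Analysis.Analysis"
begin

definition hoelder_on :: "real \<Rightarrow> 'a::metric_space set \<Rightarrow> ('a \<Rightarrow> 'b::real_normed_vector) \<Rightarrow> bool" where
  "hoelder_on \<alpha> S f \<longleftrightarrow> (\<exists>C. \<forall>x\<in>S. \<forall>y\<in>S. norm (f x - f y) \<le> C * dist x y powr \<alpha>)"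

definition C0_alpha :: "real \<Rightarrow> 'a::metric_space set \<Rightarrow> ('a \<Rightarrow> 'b::real_normed_vector) \<Rightarrow> bool" where
  "C0_alpha \<alpha> S f \<longleftrightarrow> continuous_on S f \<and> bounded (f ` S) \<and> hoelder_on \<alpha> S f"

text \<open>C^{2,alpha} on an open set S, with explicit first and second Frechet derivatives
  Df, D2f, all of f, Df, D2f bounded and uniformly Hoelder on S (so they extend to the closure).\<close>
definition C2_alpha_with ::
  "real \<Rightarrow> 'a::real_normed_vector set \<Rightarrow> ('a \<Rightarrow> 'b::real_normed_vector)
     \<Rightarrow> ('a \<Rightarrow> ('a \<Rightarrow>\<^sub>L 'b)) \<Rightarrow> ('a \<Rightarrow> ('a \<Rightarrow>\<^sub>L ('a \<Rightarrow>\<^sub>L 'b))) \<Rightarrow> bool" where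
  "C2_alpha_with \<alpha> S f Df D2f \<longleftrightarrow>
     (\<forall>x\<in>S. (f has_derivative blinfun_apply (Df x)) (at x) \<and>
             (Df has_derivative blinfun_apply (D2f x)) (at x)) \<and>
     C0_alpha \<alpha> S f \<and> C0_alpha \<alpha> S Df \<and> C0_alpha \<alpha> S D2f"

definition C2_alpha :: "real \<Rightarrow> 'a::real_normed_vector set \<Rightarrow> ('a \<Rightarrow> 'b::real_normed_vector) \<Rightarrow> bool" where
  "C2_alpha \<alpha> S f \<longleftrightarrow> (\<exists>Df D2f. C2_alpha_with \<alpha> S f Df D2f)"

definition C2_alpha_boundary :: "real \<Rightarrow> (real^'n) set \<Rightarrow> bool" where
  "C2_alpha_boundary \<alpha> \<Omega> \<longleftrightarrow>
    (\<forall>x0\<in>frontier \<Omega>. \<exists>U (\<psi>::real^'n \<Rightarrow> real^'n) k.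
       open U \<and> bounded U \<and> x0 \<in> U \<and> inj_on \<psi> U \<and> open (\<psi> ` U) \<and>
       C2_alpha \<alpha> U \<psi> \<and> C2_alpha \<alpha> (\<psi> ` U) (the_inv_into U \<psi>) \<and>
       \<psi> ` (U \<inter> \<Omega>) = {y \<in> \<psi> ` U. y $ k > 0} \<and>
       \<psi> ` (U \<inter> frontier \<Omega>) = {y \<in> \<psi> ` U. y $ k = 0})"

definition lap :: "((real^'n) \<Rightarrow>\<^sub>L ((real^'n) \<Rightarrow>\<^sub>L real)) \<Rightarrow> real" where
  "lap H = (\<Sum>i\<in>UNIV. blinfun_apply (blinfun_apply H (axis i 1)) (axis i 1))"

definition grad_sq :: "((real^'n) \<Rightarrow>\<^sub>L real) \<Rightarrow> real" where
  "grad_sq L = (\<Sum>i\<in>UNIV. (blinfun_apply L (axis i 1))\<^sup>2)"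

definition is_solution :: "real \<Rightarrow> (real^'n) set \<Rightarrow> (real^'n \<Rightarrow> real) \<Rightarrow> (real^'n \<Rightarrow> real)
    \<Rightarrow> real \<Rightarrow> (real^'n \<Rightarrow> real) \<Rightarrow> bool" where
  "is_solution \<alpha> \<Omega> a c \<epsilon> u \<longleftrightarrow>
     continuous_on (closure \<Omega>) u \<and>
     (\<exists>Du D2u. C2_alpha_with \<alpha> \<Omega> u Du D2u \<and>
        (\<forall>x\<in>\<Omega>. - lap (D2u x) + c x * inverse (u x + \<epsilon>) * grad_sq (Du x) = a x)) \<and>
     (\<forall>x\<in>\<Omega>. u x > 0) \<and> (\<forall>x\<in>frontier \<Omega>. u x = 0)"

end

theory Submission
  imports Defs
begin

(* Uniqueness by a comparison principle for the ratio of shifted solutions.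
   If u and v both solve  -Lap w + c (w+eps)^-1 |grad w|^2 = a  with zero boundary values,
   let g = (u+eps)/(v+eps) and let M = g(x0) be its maximum over the compact closure.
   If M > 1 then x0 is interior (g = 1 on the boundary), and  u - M v  has a local
   maximum at x0, so  grad u = M grad v  and  D^2u(e,e) <= M D^2v(e,e)  there.
   The nonlinear term is invariant under the scaling  w+eps -> M (w+eps)  while the
   right-hand side a > 0 is not; comparing the two equations at x0 gives M <= 1.
   Hence u <= v, and by symmetry u = v. *)

lemma local_max_line_conditions:
  fixes f f' :: "real \<Rightarrow> real"
  assumes d: "0 < d" and max: "\<forall>t. \<bar>t\<bar> < d \<longrightarrow> f t \<le> f 0"
    and deriv1: "\<forall>t. \<bar>t\<bar> < d \<longrightarrow> (f has_real_derivative f' t) (at t)"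
    and deriv2: "(f' has_real_derivative L) (at 0)"
  shows "f' 0 = 0 \<and> L \<le> 0"
proof -
  have crit: "f' 0 = 0"
    by (rule DERIV_local_max[of f "f' 0" 0 d]) (use deriv1 d max in \<open>auto simp: dist_real_def\<close>)
  moreover have "L \<le> 0"
  proof (rule ccontr)
    assume "\<not> L \<le> 0"
    then obtain e where e: "e > 0" "\<forall>h>0. h < e \<longrightarrow> f' 0 < f' (0 + h)"
      using DERIV_pos_inc_right[OF deriv2] by force
    define h where "h = min e d / 2"
    have h: "0 < h" "h < e" "h < d" using e d by (auto simp: h_def)
    obtain z where z: "0 < z" "z < h" "f h - f 0 = h * f' z"
      using MVT2[of 0 h f f'] h deriv1 by auto
    text \<open>By the mean value theorem f increases on (0,h), contradicting maximality.\<close>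
    have "f' z > 0" using e(2) z h crit by auto
    then have "f h - f 0 > 0" using z h by simp
    moreover have "f h \<le> f 0" using max h by auto
    ultimately show False by simp
  qed
  ultimately show ?thesis ..
qed

lemma line_derivative:
  assumes "(w has_derivative blinfun_apply (Dw (x0 + t *\<^sub>R e))) (at (x0 + t *\<^sub>R e))"
  shows "((\<lambda>t. w (x0 + t *\<^sub>R e)) has_real_derivative blinfun_apply (Dw (x0 + t *\<^sub>R e)) e) (at t)"
proof -
  have "((\<lambda>t. x0 + t *\<^sub>R e) has_derivative (\<lambda>h. h *\<^sub>R e)) (at t)"
    by (auto intro!: derivative_eq_intros)
  from has_derivative_compose[OF this assms] show ?thesis
    unfolding has_field_derivative_def
    by (simp add: blinfun.scaleR_right mult.commute[of _ "blinfun_apply (Dw (x0 + t *\<^sub>R e)) e"])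
qed

lemma line_second_derivative:
  assumes "(Dw has_derivative blinfun_apply (D2w x0)) (at x0)"
  shows "((\<lambda>t. blinfun_apply (Dw (x0 + t *\<^sub>R e)) e) has_real_derivative
      blinfun_apply (blinfun_apply (D2w x0) e) e) (at 0)"
proof -
  have "((\<lambda>t. x0 + t *\<^sub>R e) has_derivative (\<lambda>h. h *\<^sub>R e)) (at 0)"
    by (auto intro!: derivative_eq_intros)
  from has_derivative_compose[OF this, of Dw] assms
  have "((\<lambda>t. blinfun_apply (Dw (x0 + t *\<^sub>R e)) e) has_derivative
      (\<lambda>h. blinfun_apply (blinfun_apply (D2w x0) (h *\<^sub>R e)) e)) (at 0)"
    by (auto intro!: derivative_eq_intros)
  then show ?thesis
    unfolding has_field_derivative_def
    by (simp add: blinfun.scaleR_right blinfun.scaleR_left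
        mult.commute[of _ "blinfun_apply (blinfun_apply (D2w x0) e) e"])
qed

lemma local_max_conditions:
  fixes w :: "'a::real_normed_vector \<Rightarrow> real"
  assumes r: "0 < r" and max: "\<forall>y\<in>ball x0 r. w y \<le> w x0"
    and deriv1: "\<forall>y\<in>ball x0 r. (w has_derivative blinfun_apply (Dw y)) (at y)"
    and deriv2: "(Dw has_derivative blinfun_apply (D2w x0)) (at x0)"
  shows "blinfun_apply (Dw x0) e = 0 \<and> blinfun_apply (blinfun_apply (D2w x0) e) e \<le> 0"
proof (cases "e = 0")
  case True
  then show ?thesis by simp
next
  case False
  define d where "d = r / norm e"
  have d: "0 < d" using r False by (simp add: d_def)
  have on_ball: "x0 + t *\<^sub>R e \<in> ball x0 r" if "\<bar>t\<bar> < d" for t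
    using that False by (simp add: dist_norm d_def field_simps)
  have "\<forall>t. \<bar>t\<bar> < d \<longrightarrow> w (x0 + t *\<^sub>R e) \<le> w (x0 + 0 *\<^sub>R e)"
    using max on_ball by simp
  moreover have "\<forall>t. \<bar>t\<bar> < d \<longrightarrow> ((\<lambda>t. w (x0 + t *\<^sub>R e)) has_real_derivative
      blinfun_apply (Dw (x0 + t *\<^sub>R e)) e) (at t)"
    using deriv1 on_ball by (blast intro: line_derivative)
  moreover note line_second_derivative[of Dw D2w x0 e, OF deriv2]
  ultimately have "blinfun_apply (Dw (x0 + 0 *\<^sub>R e)) e = 0 \<and>
      blinfun_apply (blinfun_apply (D2w x0) e) e \<le> 0"
    by (rule local_max_line_conditions[OF d])
  then show ?thesis by simp
qed

lemma lap_diff_scaleR: "lap (H - M *\<^sub>R K) = lap H - M * lap K"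
  by (simp add: lap_def blinfun.diff_left blinfun.scaleR_left sum_subtractf sum_distrib_left)

lemma lap_nonpos:
  assumes "\<And>e. blinfun_apply (blinfun_apply H e) e \<le> 0"
  shows "lap H \<le> 0"
  unfolding lap_def using assms by (simp add: sum_nonpos)

lemma grad_sq_scaleR: "grad_sq (M *\<^sub>R L) = M\<^sup>2 * grad_sq L"
  by (simp add: grad_sq_def blinfun.scaleR_left sum_distrib_left power_mult_distrib)

text \<open>Scaling invariance: replacing w+eps by M (w+eps) and grad w by M grad w leaves the
  first-order term c (w+eps)^-1 |grad w|^2 multiplied by M, so a second function obeying
  the same equation with a larger Laplacian bound forces M <= 1 when a > 0.\<close>
lemma scaled_equation_ratio_le_one:
  fixes q G Lu Lv a c M :: real
  assumes q: "q > 0" and M: "M > 0" and a: "a > 0"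
    and eq_u: "- Lu + c * inverse (M * q) * (M\<^sup>2 * G) = a"
    and eq_v: "- Lv + c * inverse q * G = a"
    and lap_le: "Lu \<le> M * Lv"
  shows "M \<le> 1"
proof -
  have "c * inverse (M * q) * (M\<^sup>2 * G) = M * (c * inverse q * G)"
    using M q by (simp add: power2_eq_square)
  then have "Lu = M * (c * inverse q * G) - a" using eq_u by linarith
  with eq_v lap_le have "M * a \<le> 1 * a" by (simp add: algebra_simps)
  with a show ?thesis by simp
qed

text \<open>Local touching argument: if M (v+eps) lies above u+eps near an interior point x0 and
  touches it there, and both functions satisfy the equation at x0, then M <= 1.
  At x0 the function u - M v has a local maximum, which yields grad u = M grad v and a
  Laplacian inequality; the scaling lemma then applies.\<close>
lemma touching_from_above_le_one:
  fixes \<Omega> :: "(real^'n) set" and u v :: "real^'n \<Rightarrow> real"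
  assumes \<Omega>: "open \<Omega>" and x0: "x0 \<in> \<Omega>"
    and deriv_u: "\<forall>x\<in>\<Omega>. (u has_derivative blinfun_apply (Du x)) (at x) \<and>
      (Du has_derivative blinfun_apply (D2u x)) (at x)"
    and deriv_v: "\<forall>x\<in>\<Omega>. (v has_derivative blinfun_apply (Dv x)) (at x) \<and>
      (Dv has_derivative blinfun_apply (D2v x)) (at x)"
    and above: "\<forall>y\<in>\<Omega>. u y + \<epsilon> \<le> M * (v y + \<epsilon>)"
    and touch: "u x0 + \<epsilon> = M * (v x0 + \<epsilon>)"
    and M: "M > 0" and v_pos: "v x0 + \<epsilon> > 0" and a_pos: "a > 0"
    and eq_u: "- lap (D2u x0) + c * inverse (u x0 + \<epsilon>) * grad_sq (Du x0) = a"
    and eq_v: "- lap (D2v x0) + c * inverse (v x0 + \<epsilon>) * grad_sq (Dv x0) = a"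
  shows "M \<le> 1"
proof -
  obtain r where r: "r > 0" "ball x0 r \<subseteq> \<Omega>" using \<Omega> x0 open_contains_ball by blast
  have w_max: "\<forall>y\<in>ball x0 r. u y - M * v y \<le> u x0 - M * v x0"
    using above touch r(2) by (force simp: algebra_simps)
  have deriv1_w: "\<forall>y\<in>ball x0 r. ((\<lambda>y. u y - M * v y) has_derivative
      blinfun_apply (Du y - M *\<^sub>R Dv y)) (at y)"
    using deriv_u deriv_v r(2)
    by (auto intro!: derivative_eq_intros simp: blinfun.diff_left blinfun.scaleR_left)
  have deriv2_w: "((\<lambda>y. Du y - M *\<^sub>R Dv y) has_derivative
      blinfun_apply (D2u x0 - M *\<^sub>R D2v x0)) (at x0)"
    using deriv_u deriv_v x0
    by (auto intro!: derivative_eq_intros simp: blinfun.diff_left blinfun.scaleR_left)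
  note w_conditions = local_max_conditions[of r x0 "\<lambda>y. u y - M * v y" "\<lambda>y. Du y - M *\<^sub>R Dv y"
      "\<lambda>_. D2u x0 - M *\<^sub>R D2v x0", OF r(1) w_max deriv1_w deriv2_w]
  have "Du x0 = M *\<^sub>R Dv x0"
    using w_conditions by (intro blinfun_eqI) (simp add: blinfun.diff_left)
  then have grad: "grad_sq (Du x0) = M\<^sup>2 * grad_sq (Dv x0)" by (simp add: grad_sq_scaleR)
  have "lap (D2u x0 - M *\<^sub>R D2v x0) \<le> 0"
    using w_conditions by (intro lap_nonpos) blast
  then have lap_le: "lap (D2u x0) \<le> M * lap (D2v x0)" by (simp add: lap_diff_scaleR)
  have "- lap (D2u x0) + c * inverse (M * (v x0 + \<epsilon>)) * (M\<^sup>2 * grad_sq (Dv x0)) = a"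
    using eq_u touch grad by metis
  then show ?thesis
    using scaled_equation_ratio_le_one[OF v_pos M a_pos _ eq_v lap_le] by simp
qed

lemma solution_comparison:
  fixes \<Omega> :: "(real^'n) set" and a c u v :: "real^'n \<Rightarrow> real" and \<alpha> \<epsilon> :: real
  assumes \<Omega>: "open \<Omega>" "bounded \<Omega>"
    and a_pos: "\<forall>x\<in>closure \<Omega>. a x > 0" and \<epsilon>: "0 < \<epsilon>"
    and sol_u: "is_solution \<alpha> \<Omega> a c \<epsilon> u" and sol_v: "is_solution \<alpha> \<Omega> a c \<epsilon> v"
    and x1: "x1 \<in> closure \<Omega>"
  shows "u x1 \<le> v x1"
proof (rule ccontr)
  assume "\<not> u x1 \<le> v x1"
  have closure_split: "closure \<Omega> = \<Omega> \<union> frontier \<Omega>" by (simp add: closure_Un_frontier)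
  obtain Du D2u where Cu: "C2_alpha_with \<alpha> \<Omega> u Du D2u"
    and eq_u: "\<forall>x\<in>\<Omega>. - lap (D2u x) + c x * inverse (u x + \<epsilon>) * grad_sq (Du x) = a x"
    using sol_u unfolding is_solution_def by blast
  obtain Dv D2v where Cv: "C2_alpha_with \<alpha> \<Omega> v Dv D2v"
    and eq_v: "\<forall>x\<in>\<Omega>. - lap (D2v x) + c x * inverse (v x + \<epsilon>) * grad_sq (Dv x) = a x"
    using sol_v unfolding is_solution_def by blast
  have "\<forall>x\<in>closure \<Omega>. v x \<ge> 0"
    using sol_v closure_split unfolding is_solution_def by fastforce
  then have v_shift_pos: "\<forall>x\<in>closure \<Omega>. v x + \<epsilon> > 0" using \<epsilon> by force
  define g where "g x = (u x + \<epsilon>) / (v x + \<epsilon>)" for x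
  have "continuous_on (closure \<Omega>) u" "continuous_on (closure \<Omega>) v"
    using sol_u sol_v unfolding is_solution_def by blast+
  then have "continuous_on (closure \<Omega>) g"
    using v_shift_pos unfolding g_def
    by (intro continuous_on_divide continuous_on_add continuous_on_const) auto
  moreover have "compact (closure \<Omega>)" "closure \<Omega> \<noteq> {}" using \<Omega>(2) x1 by auto
  ultimately obtain x0 where x0: "x0 \<in> closure \<Omega>" and g_max: "\<forall>y\<in>closure \<Omega>. g y \<le> g x0"
    using continuous_attains_sup by metis
  define M where "M = g x0"
  have "g x1 > 1" using \<open>\<not> u x1 \<le> v x1\<close> v_shift_pos x1 by (simp add: g_def field_simps)
  then have M_gt1: "M > 1" using g_max x1 M_def by force
  have "x0 \<notin> frontier \<Omega>"
  proof
    assume "x0 \<in> frontier \<Omega>"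
    then have "M = 1" using sol_u sol_v \<epsilon> unfolding is_solution_def M_def g_def by auto
    with M_gt1 show False by simp
  qed
  with x0 closure_split have x0_in: "x0 \<in> \<Omega>" by blast
  have above: "\<forall>y\<in>\<Omega>. u y + \<epsilon> \<le> M * (v y + \<epsilon>)"
    using g_max v_shift_pos closure_subset by (fastforce simp: M_def g_def field_simps)
  have touch: "u x0 + \<epsilon> = M * (v x0 + \<epsilon>)"
    using v_shift_pos x0 by (force simp: M_def g_def)
  have "M \<le> 1"
  proof (rule touching_from_above_le_one[where a = "a x0" and c = "c x0", OF \<Omega>(1) x0_in _ _ above touch])
    show "\<forall>x\<in>\<Omega>. (u has_derivative blinfun_apply (Du x)) (at x) \<and>
        (Du has_derivative blinfun_apply (D2u x)) (at x)"
      using Cu unfolding C2_alpha_with_def by blast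
    show "\<forall>x\<in>\<Omega>. (v has_derivative blinfun_apply (Dv x)) (at x) \<and>
        (Dv has_derivative blinfun_apply (D2v x)) (at x)"
      using Cv unfolding C2_alpha_with_def by blast
  qed (use M_gt1 v_shift_pos a_pos x0 eq_u eq_v x0_in in auto)
  with M_gt1 show False by simp
qed

theorem mainTheorem4:
  fixes \<Omega> :: "(real^'n) set" and a c u v :: "real^'n \<Rightarrow> real" and \<alpha> \<epsilon> :: real
  assumes "open \<Omega>" and "connected \<Omega>" and "bounded \<Omega>"
    and "0 < \<alpha>" and "\<alpha> < 1"
    and "C2_alpha_boundary \<alpha> \<Omega>"
    and "C0_alpha \<alpha> (closure \<Omega>) a" and "C0_alpha \<alpha> (closure \<Omega>) c"
    and "\<forall>x\<in>closure \<Omega>. a x > 0" and "\<forall>x\<in>closure \<Omega>. c x > 0"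
    and "0 < \<epsilon>" and "\<epsilon> < 1"
    and "is_solution \<alpha> \<Omega> a c \<epsilon> u" and "is_solution \<alpha> \<Omega> a c \<epsilon> v"
  shows "\<forall>x\<in>closure \<Omega>. u x = v x"
proof
  fix x assume x: "x \<in> closure \<Omega>"
  show "u x = v x"
    using solution_comparison[OF assms(1,3,9,11,13,14) x]
      solution_comparison[OF assms(1,3,9,11,14,13) x] by simp
qed

end
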